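(* Let $a<b$ be real numbers and let $\gamma:[a,b]\to\mathbb{E}^2$ be a regular smooth parametric curve, i.e. $\gamma$ has a continuous derivative vector $\gamma'(t)$ on $[a,b]$ with $\gamma'(t)\neq0$ for all $t\in[a,b]$. For $t\in[a,b]$ let $L(t)$ be the length of the arc of $\gamma$ corresponding to parameter values in $[a,t]$. For $t\in(a,b)$ let $T(t)$ be the set of $\tau\in(a,t]$ such that the vector $\gamma'(\tau)$ is collinear to the vector $\gamma(t)-\gamma(a)$. Then $$\varlimsup_{t\to a}\frac{\sup\{L(\tau)\,:\,\tau\in T(t)\}}{L(t)}\ \geq\ \frac1e.$$
   Context: Any vector is considered collinear to the zero vector, so $T(t)=(a,t]$ when $\gamma(t)=\gamma(a)$. Derivatives at the endpoints $a$ and $b$ are one-sided. Limits at $a$ are right-hand limits. *)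

theory Defs
  imports "HOL-Analysis.Analysis"
begin

definition arc_length :: "(real \<Rightarrow> real^2) \<Rightarrow> real \<Rightarrow> real \<Rightarrow> real" where
  "arc_length g' a t = integral {a..t} (\<lambda>s. norm (g' s))"

definition collinear_params ::
  "(real \<Rightarrow> real^2) \<Rightarrow> (real \<Rightarrow> real^2) \<Rightarrow> real \<Rightarrow> real \<Rightarrow> real set" where
  "collinear_params g g' a t = {\<tau> \<in> {a<..t}. collinear {0, g' \<tau>, g t - g a}}"

end

theory Submission
  imports Defs
begin

(*
  Suppose the ratio stays below some c < 1/e near a. Write the chord g t - g a in coordinates
  p (along the initial tangent v = g' a) and q (along v rotated by a right angle). Near a the
  component p is comparable with arc length, so whenever p \<tau> > c' p t (for a suitable
  c' < 1/e) the tangent at \<tau> cannot be parallel to the chord at t: its slope q'/p' differs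
  from the chord slope \<sigma> = q/p, hence by continuity is always larger, say.
  In the logarithmic scale x = ln p one has d\<sigma>/dx = q'/p' - \<sigma>, so \<sigma> is increasing and
  d\<sigma>/dx (x) > \<sigma> (x + L) - \<sigma> (x) with L = ln (1/c') > 1. Summing this delay inequality over
  a geometric grid of step L/N shows that \<sigma> stays bounded away from 0 as x \<rightarrow> -\<infinity>,
  contradicting \<sigma> \<rightarrow> 0, which holds because the chords approach the direction v.
*)

lemma sum_shift_diff_eq:
  fixes u :: "nat \<Rightarrow> real"
  assumes "1 \<le> N"
  shows "(\<Sum>j<M. u (j + N) - u (j + 1)) = (\<Sum>k=1..<N. u (M + k) - u k)"
proof (induction M)
  case 0
  then show ?case by simp
next
  case (Suc M)
  have "(\<Sum>k=1..<N. u (Suc M + k) - u (M + k)) = u (M + N) - u (M + 1)"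
    using sum_Suc_diff'[of 1 N "\<lambda>k. u (M + k)"] assms by (simp add: add.commute)
  moreover have "(\<Sum>k=1..<N. u (Suc M + k) - u k)
      = (\<Sum>k=1..<N. u (M + k) - u k) + (\<Sum>k=1..<N. u (Suc M + k) - u (M + k))"
    by (simp add: sum.distrib[symmetric])
  ultimately show ?case using Suc by (simp add: add.commute)
qed

lemma delay_difference_sum_bound:
  fixes u :: "nat \<Rightarrow> real"
  assumes "1 \<le> N" "N \<le> M" "0 \<le> l"
    and mono: "\<And>i j. i \<le> j \<Longrightarrow> j < M + N \<Longrightarrow> u i \<le> u j"
    and step: "\<And>j. j < M \<Longrightarrow> l * (u (j + N) - u (j + 1)) \<le> u (j + 1) - u j"
  shows "l * (real N - 1) * (u M - u N) \<le> u M - u 0"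
proof -
  have "(\<Sum>k=1..<N. u M - u N) \<le> (\<Sum>k=1..<N. u (M + k) - u k)"
  proof (rule sum_mono)
    fix k assume "k \<in> {1..<N}"
    then have "u M \<le> u (M + k)" "u k \<le> u N" using mono assms(2) by auto
    then show "u M - u N \<le> u (M + k) - u k" by simp
  qed
  then have shifted: "(real N - 1) * (u M - u N) \<le> (\<Sum>j<M. u (j + N) - u (j + 1))"
    using sum_shift_diff_eq[OF assms(1), of u M] assms(1) by (simp add: of_nat_diff)
  have "l * (\<Sum>j<M. u (j + N) - u (j + 1)) \<le> (\<Sum>j<M. u (Suc j) - u j)"
    unfolding sum_distrib_left using step by (intro sum_mono) simp
  also have "\<dots> = u M - u 0" by (rule sum_lessThan_telescope)
  finally show ?thesis using mult_left_mono[OF shifted assms(3)] by (simp add: mult.assoc)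
qed

lemma filterlim_arith_progression_at_bot:
  fixes l :: real
  assumes "0 < l"
  shows "filterlim (\<lambda>K. Y - real K * l) at_bot sequentially"
  unfolding filterlim_at_bot
proof
  fix Z
  obtain n :: nat where "(Y - Z) / l < real n" using reals_Archimedean2 by blast
  then have "Y - Z < real n * l" using assms by (simp add: pos_divide_less_eq)
  have "Y - real K * l \<le> Z" if "n \<le> K" for K
  proof -
    have "real n * l \<le> real K * l" using assms that by (simp add: mult_right_mono)
    then show ?thesis using \<open>Y - Z < real n * l\<close> by linarith
  qed
  then show "\<forall>\<^sub>F K in sequentially. Y - real K * l \<le> Z"
    using eventually_sequentially by blast
qed

lemma no_increasing_delay_solution:
  fixes S :: "real \<Rightarrow> real" and Y l :: real and N :: nat
  assumes mono: "strict_mono_on {..Y} S"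
    and lim: "(S \<longlongrightarrow> 0) at_bot"
    and l: "0 < l" "1 < l * (real N - 1)"
    and delay: "\<And>y. y + real N * l \<le> Y \<Longrightarrow> l * (S (y + real N * l) - S (y + l)) \<le> S (y + l) - S y"
  shows False
proof -
  have N: "1 \<le> N" using l by (cases N) auto
  have nonneg: "0 \<le> S y" if "y \<le> Y" for y
  proof (rule tendsto_upperbound[OF lim _ trivial_limit_at_bot_linorder])
    show "\<forall>\<^sub>F z in at_bot. S z \<le> S y"
      unfolding eventually_at_bot_linorder using that mono
      by (intro exI[of _ y]) (auto intro: strict_mono_on_leD)
  qed
  define Y\<^sub>0 where "Y\<^sub>0 = Y - real N * l"
  have "Y\<^sub>0 \<le> Y" using l N unfolding Y\<^sub>0_def by simp
  then have pos: "0 < S Y\<^sub>0"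
    using nonneg[of "Y\<^sub>0 - 1"] strict_mono_onD[OF mono, of "Y\<^sub>0 - 1" Y\<^sub>0] by simp
  have bound: "l * (real N - 1) * (S Y\<^sub>0 - S (Y\<^sub>0 - real K * l)) \<le> S Y\<^sub>0" for K
  proof -
    define M where "M = N + K"
    define u where "u j = S (Y + (real j - real (M + N)) * l)" for j
    have "l * (real N - 1) * (u M - u N) \<le> u M - u 0"
    proof (rule delay_difference_sum_bound[OF N _ less_imp_le[OF l(1)]])
      show "u i \<le> u j" if "i \<le> j" "j < M + N" for i j
        unfolding u_def using that l(1)
        by (intro strict_mono_on_leD[OF mono]) (auto simp: mult_le_0_iff)
      show "l * (u (j + N) - u (j + 1)) \<le> u (j + 1) - u j" if "j < M" for j
        using delay[of "Y + (real j - real (M + N)) * l"] that l(1) mult_right_mono[of "real j" "real M" l]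
        unfolding u_def by (simp add: algebra_simps)
    qed (simp add: M_def)
    moreover have "u M = S Y\<^sub>0" "u N = S (Y\<^sub>0 - real K * l)"
      unfolding u_def Y\<^sub>0_def M_def by (simp_all add: algebra_simps)
    moreover have "0 \<le> u 0" unfolding u_def using l(1) by (intro nonneg) (simp add: mult_le_0_iff)
    ultimately show ?thesis by simp
  qed
  have "((\<lambda>K. S (Y\<^sub>0 - real K * l)) \<longlongrightarrow> 0) sequentially"
    using filterlim_compose[OF lim filterlim_arith_progression_at_bot[OF l(1)]] .
  then have "((\<lambda>K. l * (real N - 1) * (S Y\<^sub>0 - S (Y\<^sub>0 - real K * l))) \<longlongrightarrow> l * (real N - 1) * (S Y\<^sub>0 - 0)) sequentially"
    by (intro tendsto_intros)
  then have "l * (real N - 1) * S Y\<^sub>0 \<le> S Y\<^sub>0"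
    using tendsto_upperbound[OF _ always_eventually trivial_limit_sequentially] bound by fastforce
  then show False using pos l(2) by simp
qed

lemma strict_mono_on_if_deriv_pos:
  fixes p p' :: "real \<Rightarrow> real"
  assumes "continuous_on {a..e} p"
    and "\<And>t. t \<in> {a<..<e} \<Longrightarrow> (p has_real_derivative p' t) (at t)"
    and "\<And>t. t \<in> {a<..<e} \<Longrightarrow> 0 < p' t"
  shows "strict_mono_on {a..e} p"
proof (rule strict_mono_onI)
  fix x y assume xy: "x \<in> {a..e}" "y \<in> {a..e}" "x < y"
  show "p x < p y"
  proof (rule DERIV_pos_imp_increasing_open[OF \<open>x < y\<close>])
    fix z assume "x < z" "z < y"
    with xy have "z \<in> {a<..<e}" by auto
    with assms(2,3) show "\<exists>d. (p has_real_derivative d) (at z) \<and> 0 < d" by blast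
  next
    show "continuous_on {x..y} p" using continuous_on_subset[OF assms(1)] xy by auto
  qed
qed

text \<open>In the logarithmic scale \<open>ln p\<close> the chord slope \<open>q/p\<close> grows at rate \<open>q'/p' - q/p\<close>.\<close>
lemma chord_slope_log_mean_value:
  fixes p q p' q' :: "real \<Rightarrow> real"
  assumes "t\<^sub>0 < t\<^sub>1"
    and dp: "\<And>t. t \<in> {t\<^sub>0..t\<^sub>1} \<Longrightarrow> (p has_real_derivative p' t) (at t)"
    and dq: "\<And>t. t \<in> {t\<^sub>0..t\<^sub>1} \<Longrightarrow> (q has_real_derivative q' t) (at t)"
    and pos: "\<And>t. t \<in> {t\<^sub>0..t\<^sub>1} \<Longrightarrow> 0 < p t" "\<And>t. t \<in> {t\<^sub>0..t\<^sub>1} \<Longrightarrow> 0 < p' t"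
  obtains \<theta> where "t\<^sub>0 < \<theta>" "\<theta> < t\<^sub>1"
    "q t\<^sub>1 / p t\<^sub>1 - q t\<^sub>0 / p t\<^sub>0 = (ln (p t\<^sub>1) - ln (p t\<^sub>0)) * (q' \<theta> / p' \<theta> - q \<theta> / p \<theta>)"
proof -
  have d\<sigma>: "((\<lambda>t. q t / p t) has_real_derivative p' t / p t * (q' t / p' t - q t / p t)) (at t)"
    and dln: "((\<lambda>t. ln (p t)) has_real_derivative p' t / p t) (at t)"
    if "t \<in> {t\<^sub>0..t\<^sub>1}" for t
  proof -
    have "p' t / p t * (q' t / p' t - q t / p t) = (q' t * p t - q t * p' t) / (p t * p t)"
      using pos[OF that] by (simp add: field_simps)
    then show "((\<lambda>t. q t / p t) has_real_derivative p' t / p t * (q' t / p' t - q t / p t)) (at t)"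
      using dp[OF that] dq[OF that] pos[OF that] by (auto intro!: derivative_eq_intros)
    show "((\<lambda>t. ln (p t)) has_real_derivative p' t / p t) (at t)"
      using dp[OF that] pos[OF that] by (auto intro!: derivative_eq_intros)
  qed
  obtain \<theta> where \<theta>: "t\<^sub>0 < \<theta>" "\<theta> < t\<^sub>1"
    "(q t\<^sub>1 / p t\<^sub>1 - q t\<^sub>0 / p t\<^sub>0) * (p' \<theta> / p \<theta>)
       = (ln (p t\<^sub>1) - ln (p t\<^sub>0)) * (p' \<theta> / p \<theta> * (q' \<theta> / p' \<theta> - q \<theta> / p \<theta>))"
    using GMVT'[OF assms(1), where f = "\<lambda>t. q t / p t" and g = "\<lambda>t. ln (p t)"
        and f' = "\<lambda>t. p' t / p t * (q' t / p' t - q t / p t)" and g' = "\<lambda>t. p' t / p t"]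
      DERIV_isCont[OF d\<sigma>] DERIV_isCont[OF dln] d\<sigma> dln
    by (auto simp del: times_divide_eq_left times_divide_eq_right)
  have "(q t\<^sub>1 / p t\<^sub>1 - q t\<^sub>0 / p t\<^sub>0) * (p' \<theta> / p \<theta>)
      = ((ln (p t\<^sub>1) - ln (p t\<^sub>0)) * (q' \<theta> / p' \<theta> - q \<theta> / p \<theta>)) * (p' \<theta> / p \<theta>)"
    using \<theta>(3) by (simp only: ac_simps)
  moreover have "p' \<theta> / p \<theta> \<noteq> 0" using pos[of \<theta>] \<theta>(1,2) by simp
  ultimately show ?thesis using that[OF \<theta>(1,2)] mult_right_cancel by blast
qed

lemma log_scale_inverse:
  fixes p :: "real \<Rightarrow> real"
  assumes "a < e" "p a = 0" "continuous_on {a..e} p" and mono: "strict_mono_on {a..e} p"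
  obtains r where "\<And>y. y < ln (p e) \<Longrightarrow> a < r y \<and> r y < e \<and> p (r y) = exp y"
    "strict_mono_on {..<ln (p e)} r" "filterlim r (at_right a) at_bot"
proof -
  have pos: "0 < p b" if "b \<in> {a<..e}" for b
    using strict_mono_onD[OF mono, of a b] that assms(1,2) by auto
  have below: "exp y < p b" if "y < ln (p b)" "b \<in> {a<..e}" for y b
    using that pos[OF that(2)] by (metis exp_less_cancel_iff exp_ln)
  have "\<exists>t. y < ln (p e) \<longrightarrow> a < t \<and> t < e \<and> p t = exp y" for y
  proof (cases "y < ln (p e)")
    case True
    then have "exp y < p e" using below assms(1) by simp
    then obtain t where "t \<in> {a..e}" "p t = exp y"
      using IVT'[of p a "exp y" e] assms(1-3) by auto
    then show ?thesis using \<open>exp y < p e\<close> assms(2) by (intro exI[of _ t]) (auto simp: order.order_iff_strict)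
  qed simp
  then obtain r where "\<forall>y. y < ln (p e) \<longrightarrow> a < r y \<and> r y < e \<and> p (r y) = exp y"
    using choice[of "\<lambda>y t. y < ln (p e) \<longrightarrow> a < t \<and> t < e \<and> p t = exp y"] by blast
  then have r: "a < r y \<and> r y < e \<and> p (r y) = exp y" if "y < ln (p e)" for y
    using that by blast
  have r_less: "r y < b" if "y < ln (p e)" "exp y < p b" "b \<in> {a..e}" for y b
    using strict_mono_on_less[OF mono, of "r y" b] r[OF that(1)] that(2,3) by auto
  have near_a: "\<forall>\<^sub>F y in at_bot. a < r y \<and> r y < b" if b: "b \<in> {a<..e}" for b
  proof -
    have "ln (p b) \<le> ln (p e)"
      using b pos[OF b] strict_mono_on_leD[OF mono, of b e] by simp
    then have "a < r y \<and> r y < b" if "y < ln (p b)" for y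
      using r[of y] r_less[of y b] below[OF that b] that b by auto
    then show ?thesis unfolding eventually_at_bot_dense by blast
  qed
  have "strict_mono_on {..<ln (p e)} r"
  proof (rule strict_mono_onI)
    fix y y' assume "y \<in> {..<ln (p e)}" "y' \<in> {..<ln (p e)}" "y < y'"
    then show "r y < r y'" using r[of y] r[of y'] r_less[of y "r y'"] by auto
  qed
  moreover have "filterlim r (at_right a) at_bot"
    unfolding filterlim_at
  proof
    show "\<forall>\<^sub>F y in at_bot. r y \<in> {a<..} \<and> r y \<noteq> a"
      using near_a[of e] assms(1) by (auto elim: eventually_mono)
    show "(r \<longlongrightarrow> a) at_bot"
    proof (rule order_tendstoI)
      show "\<forall>\<^sub>F y in at_bot. a' < r y" if "a' < a" for a'
        using near_a[of e] assms(1) that by (auto elim: eventually_mono)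
      show "\<forall>\<^sub>F y in at_bot. r y < a'" if "a < a'" for a'
        using near_a[of "min a' e"] assms(1) that by (auto elim: eventually_mono)
    qed
  qed
  ultimately show ?thesis using that r by blast
qed

lemma exists_delay_grid:
  fixes c :: real
  assumes "0 < c" "c * exp 1 < 1"
  obtains N :: nat and l where "0 < l" "c * exp (real N * l) = 1" "1 < l * (real N - 1)"
proof -
  define L where "L = - ln c"
  have "c < exp (-1)" using assms(2) by (simp add: exp_minus field_simps)
  then have "ln c < ln (exp (-1))" using assms(1) by (simp only: ln_less_cancel_iff exp_gt_zero)
  then have "1 < L" unfolding L_def by simp
  obtain N :: nat where N: "L / (L - 1) < real N" using reals_Archimedean2 by blast
  moreover have "0 < L / (L - 1)" using \<open>1 < L\<close> by simp
  ultimately have "0 < real N" by linarith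
  moreover have "c * exp L = 1" unfolding L_def using assms(1) by (simp add: exp_minus field_simps)
  ultimately show ?thesis
    using that[of "L / real N" N] N \<open>1 < L\<close> by (auto simp: field_simps)
qed

lemma continuous_on_zero_between:
  fixes f :: "real \<Rightarrow> real"
  assumes "x \<le> y" "continuous_on {x..y} f" "f x * f y \<le> 0"
  shows "\<exists>z\<in>{x..y}. f z = 0"
proof (cases "f x \<le> 0")
  case True
  then have "0 \<le> f y \<or> f x = 0" using assms(3) by (auto simp: mult_le_0_iff)
  then show ?thesis using IVT'[of f x 0 y] True assms(1,2) by force
next
  case False
  then have "f y \<le> 0" using assms(3) by (auto simp: mult_le_0_iff)
  then show ?thesis using IVT2'[of f y 0 x] False assms(1,2) by force
qed

text \<open>\<open>p t\<close>, \<open>q t\<close> are the coordinates of the chord from the start point \<open>a\<close> to \<open>t\<close>,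
  and \<open>p' t\<close>, \<open>q' t\<close> those of the tangent at \<open>t\<close>; the first coordinate increases.\<close>
locale chord_coordinates =
  fixes p q p' q' :: "real \<Rightarrow> real" and a e :: real
  assumes a_less_e: "a < e"
    and p_start: "p a = 0"
    and p_cont: "continuous_on {a..e} p"
    and p_deriv: "\<And>t. t \<in> {a<..<e} \<Longrightarrow> (p has_real_derivative p' t) (at t)"
    and q_deriv: "\<And>t. t \<in> {a<..<e} \<Longrightarrow> (q has_real_derivative q' t) (at t)"
    and p'_pos: "\<And>t. t \<in> {a<..<e} \<Longrightarrow> 0 < p' t"
begin

lemma p_strict_mono: "strict_mono_on {a..e} p"
  using strict_mono_on_if_deriv_pos p_cont p_deriv p'_pos by blast

lemma p_pos: "t \<in> {a<..e} \<Longrightarrow> 0 < p t"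
  using strict_mono_onD[OF p_strict_mono, of a t] a_less_e p_start by auto

lemma chord_slope_mean_value:
  assumes "a < t\<^sub>0" "t\<^sub>0 < t\<^sub>1" "t\<^sub>1 < e"
  obtains \<theta> where "t\<^sub>0 < \<theta>" "\<theta> < t\<^sub>1"
    "q t\<^sub>1 / p t\<^sub>1 - q t\<^sub>0 / p t\<^sub>0 = (ln (p t\<^sub>1) - ln (p t\<^sub>0)) * (q' \<theta> / p' \<theta> - q \<theta> / p \<theta>)"
proof -
  have inside: "t \<in> {a<..<e}" "t \<in> {a<..e}" if "t \<in> {t\<^sub>0..t\<^sub>1}" for t
    using that assms by auto
  show ?thesis
    by (rule chord_slope_log_mean_value[OF assms(2) p_deriv[OF inside(1)] q_deriv[OF inside(1)]
          p_pos[OF inside(2)] p'_pos[OF inside(1)]]) (assumption+, rule that, assumption+)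
qed

lemma chord_slope_strict_mono:
  assumes "\<And>t. t \<in> {a<..<e} \<Longrightarrow> q t / p t < q' t / p' t"
  shows "strict_mono_on {a<..<e} (\<lambda>t. q t / p t)"
proof (rule strict_mono_onI)
  fix x y assume xy: "x \<in> {a<..<e}" "y \<in> {a<..<e}" "x < y"
  then obtain \<theta> where \<theta>: "x < \<theta>" "\<theta> < y"
    "q y / p y - q x / p x = (ln (p y) - ln (p x)) * (q' \<theta> / p' \<theta> - q \<theta> / p \<theta>)"
    using chord_slope_mean_value[of x y] by auto
  have "0 < ln (p y) - ln (p x)"
    using strict_mono_onD[OF p_strict_mono, of x y] p_pos[of x] xy by simp
  moreover have "q \<theta> / p \<theta> < q' \<theta> / p' \<theta>" using assms[of \<theta>] xy \<theta> by auto
  ultimately have "0 < (ln (p y) - ln (p x)) * (q' \<theta> / p' \<theta> - q \<theta> / p \<theta>)" by simp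
  then show "q x / p x < q y / p y" using \<theta>(3) by simp
qed

lemma chord_slope_delay_step:
  assumes mono: "strict_mono_on {a<..<e} (\<lambda>t. q t / p t)"
    and "a < t\<^sub>0" "t\<^sub>0 < t\<^sub>1" "t\<^sub>1 < e"
    and steeper: "\<And>\<theta>. t\<^sub>0 < \<theta> \<Longrightarrow> \<theta> < t\<^sub>1 \<Longrightarrow> q T / p T < q' \<theta> / p' \<theta>"
  shows "(ln (p t\<^sub>1) - ln (p t\<^sub>0)) * (q T / p T - q t\<^sub>1 / p t\<^sub>1) \<le> q t\<^sub>1 / p t\<^sub>1 - q t\<^sub>0 / p t\<^sub>0"
proof -
  obtain \<theta> where \<theta>: "t\<^sub>0 < \<theta>" "\<theta> < t\<^sub>1"
    "q t\<^sub>1 / p t\<^sub>1 - q t\<^sub>0 / p t\<^sub>0 = (ln (p t\<^sub>1) - ln (p t\<^sub>0)) * (q' \<theta> / p' \<theta> - q \<theta> / p \<theta>)"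
    using chord_slope_mean_value[OF assms(2-4)] by blast
  have "q T / p T - q t\<^sub>1 / p t\<^sub>1 \<le> q' \<theta> / p' \<theta> - q \<theta> / p \<theta>"
    using steeper[OF \<theta>(1,2)] strict_mono_onD[OF mono, of \<theta> t\<^sub>1] \<theta> assms(2-4) by auto
  moreover have "0 \<le> ln (p t\<^sub>1) - ln (p t\<^sub>0)"
    using strict_mono_onD[OF p_strict_mono, of t\<^sub>0 t\<^sub>1] p_pos[of t\<^sub>0] assms(2-4) by simp
  ultimately show ?thesis unfolding \<theta>(3) by (rule mult_left_mono)
qed

lemma exists_delayed_tangent_slope_le_chord_slope:
  assumes "0 < c" "c * exp 1 < 1" and lim: "((\<lambda>t. q t / p t) \<longlongrightarrow> 0) (at_right a)"
  shows "\<exists>\<tau> t. a < \<tau> \<and> \<tau> \<le> t \<and> t < e \<and> c * p t < p \<tau> \<and> q' \<tau> / p' \<tau> \<le> q t / p t"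
proof (rule ccontr)
  assume "\<not> ?thesis"
  then have steeper: "q t / p t < q' \<tau> / p' \<tau>"
    if "a < \<tau>" "\<tau> \<le> t" "t < e" "c * p t < p \<tau>" for \<tau> t
    using that by (meson not_le)
  define \<sigma> where "\<sigma> t = q t / p t" for t
  have "c < 1" using assms(1,2) by (smt (verit) exp_ge_add_one_self mult_less_cancel_left2)
  then have \<sigma>_mono: "strict_mono_on {a<..<e} \<sigma>"
    unfolding \<sigma>_def using steeper p_pos by (intro chord_slope_strict_mono) auto
  obtain r where r: "\<And>y. y < ln (p e) \<Longrightarrow> a < r y \<and> r y < e \<and> p (r y) = exp y"
    and r_mono: "strict_mono_on {..<ln (p e)} r" and r_lim: "filterlim r (at_right a) at_bot"
    using log_scale_inverse[OF a_less_e p_start p_cont p_strict_mono] by metis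
  obtain N :: nat and l where l: "0 < l" "c * exp (real N * l) = 1" "1 < l * (real N - 1)"
    using exists_delay_grid[OF assms(1,2)] by blast
  show False
  proof (rule no_increasing_delay_solution[of "ln (p e) - 1" "\<sigma> \<circ> r", OF _ _ l(1,3)])
    show "strict_mono_on {..ln (p e) - 1} (\<sigma> \<circ> r)"
    proof (rule strict_mono_onI)
      fix y y' assume "y \<in> {..ln (p e) - 1}" "y' \<in> {..ln (p e) - 1}" "y < y'"
      then show "(\<sigma> \<circ> r) y < (\<sigma> \<circ> r) y'"
        using r[of y] r[of y'] strict_mono_onD[OF r_mono, of y y'] strict_mono_onD[OF \<sigma>_mono, of "r y" "r y'"]
        by simp
    qed
    show "((\<sigma> \<circ> r) \<longlongrightarrow> 0) at_bot"
      using filterlim_compose[OF lim[folded \<sigma>_def] r_lim] by (simp add: comp_def)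
  next
    fix y assume y: "y + real N * l \<le> ln (p e) - 1"
    define t\<^sub>0 t\<^sub>1 T where "t\<^sub>0 = r y" and "t\<^sub>1 = r (y + l)" and "T = r (y + real N * l)"
    have "l * (real N - 1) = real N * l - l" by (simp add: algebra_simps)
    then have lin: "y < y + l" "y + l \<le> y + real N * l"
      "y \<in> {..<ln (p e)}" "y + l \<in> {..<ln (p e)}" "y + real N * l \<in> {..<ln (p e)}"
      using l(1,3) y unfolding lessThan_iff by linarith+
    have pts: "a < t\<^sub>0" "t\<^sub>0 < t\<^sub>1" "t\<^sub>1 \<le> T" "T < e"
      "p t\<^sub>0 = exp y" "p t\<^sub>1 = exp (y + l)" "p T = exp (y + real N * l)"
      using r lin(3-5) strict_mono_onD[OF r_mono lin(3,4,1)] strict_mono_on_leD[OF r_mono lin(4,5,2)]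
      unfolding t\<^sub>0_def t\<^sub>1_def T_def by auto
    have "c * p T = p t\<^sub>0" using pts(5,7) l(2) by (simp add: exp_add mult.left_commute)
    then have "q T / p T < q' \<theta> / p' \<theta>" if "t\<^sub>0 < \<theta>" "\<theta> < t\<^sub>1" for \<theta>
      using steeper[of \<theta> T] strict_mono_onD[OF p_strict_mono, of t\<^sub>0 \<theta>] pts that by auto
    from chord_slope_delay_step[OF \<sigma>_mono[unfolded \<sigma>_def] pts(1,2) _ this] pts
    show "l * ((\<sigma> \<circ> r) (y + real N * l) - (\<sigma> \<circ> r) (y + l)) \<le> (\<sigma> \<circ> r) (y + l) - (\<sigma> \<circ> r) y"
      unfolding t\<^sub>0_def t\<^sub>1_def T_def \<sigma>_def by auto
  qed
qed

lemma continuous_on_chord_slope: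
  assumes "a < x" "y < e"
  shows "continuous_on {x..y} (\<lambda>t. q t / p t)"
proof -
  have "isCont (\<lambda>t. q t / p t) t" if "t \<in> {x..y}" for t
    using that assms DERIV_isCont[OF p_deriv] DERIV_isCont[OF q_deriv] p_pos[of t]
    by (intro continuous_intros) auto
  then show ?thesis by (simp add: continuous_at_imp_continuous_on)
qed

lemma tangent_slope_crosses_chord_slope:
  assumes tangent_cont: "continuous_on {a<..<e} (\<lambda>t. q' t / p' t)"
    and "a < \<tau>\<^sub>0" "\<tau>\<^sub>0 \<le> t" "t < e"
    and "(q' \<tau>\<^sub>0 / p' \<tau>\<^sub>0 - q t / p t) * (q' t / p' t - q t / p t) \<le> 0"
  shows "\<exists>\<tau>\<in>{\<tau>\<^sub>0..t}. q' \<tau> / p' \<tau> = q t / p t"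
proof -
  have "continuous_on {\<tau>\<^sub>0..t} (\<lambda>\<tau>. q' \<tau> / p' \<tau> - q t / p t)"
    using assms(2,4) by (intro continuous_on_diff continuous_on_const continuous_on_subset[OF tangent_cont]) auto
  from continuous_on_zero_between[OF assms(3) this] assms(5) show ?thesis by auto
qed

lemma tangent_slope_crosses_chord_slope_diagonal:
  assumes tangent_cont: "continuous_on {a<..<e} (\<lambda>t. q' t / p' t)"
    and "a < x" "x < e" "a < y" "y < e"
    and "(q' x / p' x - q x / p x) * (q' y / p' y - q y / p y) \<le> 0"
  shows "\<exists>t. a < t \<and> t < e \<and> q' t / p' t = q t / p t"
proof -
  have crossing: "\<exists>t\<in>{x..y}. q' t / p' t = q t / p t"
    if "a < x" "x \<le> y" "y < e" "(q' x / p' x - q x / p x) * (q' y / p' y - q y / p y) \<le> 0" for x y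
  proof -
    have "continuous_on {x..y} (\<lambda>t. q' t / p' t - q t / p t)"
      using that continuous_on_chord_slope[of x y]
      by (intro continuous_on_diff continuous_on_subset[OF tangent_cont]) auto
    from continuous_on_zero_between[OF that(2) this] that(4) show ?thesis by auto
  qed
  show ?thesis
  proof (cases "x \<le> y")
    case True
    then obtain t where "t \<in> {x..y}" "q' t / p' t = q t / p t" using crossing[of x y] assms by blast
    then show ?thesis using assms by (intro exI[of _ t]) auto
  next
    case False
    then obtain t where "t \<in> {y..x}" "q' t / p' t = q t / p t"
      using crossing[of y x] assms by (auto simp: mult.commute)
    then show ?thesis using assms by (intro exI[of _ t]) auto
  qed
qed

lemma exists_delayed_tangent_slope_eq_chord_slope:
  assumes "0 < c" "c * exp 1 < 1"
    and tangent_cont: "continuous_on {a<..<e} (\<lambda>t. q' t / p' t)"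
    and lim: "((\<lambda>t. q t / p t) \<longlongrightarrow> 0) (at_right a)"
  shows "\<exists>\<tau> t. a < \<tau> \<and> \<tau> \<le> t \<and> t < e \<and> c * p t < p \<tau> \<and> q' \<tau> / p' \<tau> = q t / p t"
proof -
  define gap where "gap \<tau> t = q' \<tau> / p' \<tau> - q t / p t" for \<tau> t
  have admissible: "a < \<tau> \<and> \<tau> \<le> t \<and> t < e \<and> c * p t < p \<tau>"
    if "a < \<tau>\<^sub>0" "\<tau>\<^sub>0 \<le> \<tau>" "\<tau> \<le> t" "t < e" "c * p t < p \<tau>\<^sub>0" for \<tau>\<^sub>0 \<tau> t
    using strict_mono_on_leD[OF p_strict_mono, of \<tau>\<^sub>0 \<tau>] that by auto
  have "c < 1" using assms(1,2) by (smt (verit) exp_ge_add_one_self mult_less_cancel_left2)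
  then have diagonal_admissible: "c * p t < p t" if "a < t" "t < e" for t
    using p_pos[of t] that by simp
  obtain \<tau>\<^sub>1 t\<^sub>1 where below: "a < \<tau>\<^sub>1" "\<tau>\<^sub>1 \<le> t\<^sub>1" "t\<^sub>1 < e" "c * p t\<^sub>1 < p \<tau>\<^sub>1" "gap \<tau>\<^sub>1 t\<^sub>1 \<le> 0"
    using exists_delayed_tangent_slope_le_chord_slope[OF assms(1,2) lim] unfolding gap_def by auto
  interpret reflected: chord_coordinates p "\<lambda>t. - q t" p' "\<lambda>t. - q' t" a e
    using a_less_e p_start p_cont p_deriv q_deriv p'_pos by unfold_locales (auto intro: DERIV_minus)
  obtain \<tau>\<^sub>2 t\<^sub>2 where above: "a < \<tau>\<^sub>2" "\<tau>\<^sub>2 \<le> t\<^sub>2" "t\<^sub>2 < e" "c * p t\<^sub>2 < p \<tau>\<^sub>2" "0 \<le> gap \<tau>\<^sub>2 t\<^sub>2"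
    using reflected.exists_delayed_tangent_slope_le_chord_slope[OF assms(1,2)] tendsto_minus[OF lim]
    unfolding gap_def by auto
  consider "0 \<le> gap t\<^sub>1 t\<^sub>1" | "gap t\<^sub>2 t\<^sub>2 \<le> 0" | "gap t\<^sub>1 t\<^sub>1 < 0" "0 < gap t\<^sub>2 t\<^sub>2" by linarith
  then show ?thesis
  proof cases
    case 1
    then obtain \<tau> where "\<tau> \<in> {\<tau>\<^sub>1..t\<^sub>1}" "q' \<tau> / p' \<tau> = q t\<^sub>1 / p t\<^sub>1"
      using tangent_slope_crosses_chord_slope[OF tangent_cont below(1-3)] below(5)
      unfolding gap_def by (auto simp: mult_le_0_iff)
    then show ?thesis
      using admissible[of \<tau>\<^sub>1 \<tau> t\<^sub>1] below by (intro exI[of _ \<tau>] exI[of _ t\<^sub>1]) auto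
  next
    case 2
    then obtain \<tau> where "\<tau> \<in> {\<tau>\<^sub>2..t\<^sub>2}" "q' \<tau> / p' \<tau> = q t\<^sub>2 / p t\<^sub>2"
      using tangent_slope_crosses_chord_slope[OF tangent_cont above(1-3)] above(5)
      unfolding gap_def by (auto simp: mult_le_0_iff)
    then show ?thesis
      using admissible[of \<tau>\<^sub>2 \<tau> t\<^sub>2] above by (intro exI[of _ \<tau>] exI[of _ t\<^sub>2]) auto
  next
    case 3
    then have "gap t\<^sub>1 t\<^sub>1 * gap t\<^sub>2 t\<^sub>2 \<le> 0" by (auto simp: mult_le_0_iff)
    then obtain t where "a < t" "t < e" "q' t / p' t = q t / p t"
      using tangent_slope_crosses_chord_slope_diagonal[OF tangent_cont, of t\<^sub>1 t\<^sub>2] below above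
      unfolding gap_def by auto
    then show ?thesis using diagonal_admissible by blast
  qed
qed

end

definition rot90 :: "real^2 \<Rightarrow> real^2" where
  "rot90 v = (\<chi> i. if i = 1 then - v$2 else v$1)"

lemma inner_vec2: "(x::real^2) \<bullet> y = x$1 * y$1 + x$2 * y$2"
  by (simp add: inner_vec_def sum_2)

lemma rot90_inner_self [simp]: "rot90 v \<bullet> v = 0"
  by (simp add: rot90_def inner_vec2)

lemma collinear_if_rot90_slopes_eq:
  fixes v w C :: "real^2"
  assumes "v \<bullet> w \<noteq> 0" "v \<bullet> C \<noteq> 0" "(rot90 v \<bullet> w) / (v \<bullet> w) = (rot90 v \<bullet> C) / (v \<bullet> C)"
  shows "collinear {0, w, C}"
proof -
  have "(rot90 v \<bullet> w) * (v \<bullet> C) - (v \<bullet> w) * (rot90 v \<bullet> C) = (norm v)^2 * (w$2 * C$1 - w$1 * C$2)"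
    unfolding power2_norm_eq_inner inner_vec2 rot90_def by (simp add: algebra_simps)
  moreover have "v \<noteq> 0" using assms(1) by auto
  ultimately have cross: "w$1 * C$2 = w$2 * C$1" using assms by (simp add: frac_eq_eq)
  have "\<exists>k. C = k *\<^sub>R w"
  proof (cases "w$1 = 0")
    case True
    moreover have "w \<noteq> 0" using assms(1) by auto
    ultimately have "w$2 \<noteq> 0" by (metis exhaust_2 vec_eq_iff zero_index)
    then show ?thesis
      using cross True by (intro exI[of _ "C$2 / w$2"]) (auto simp: vec_eq_iff forall_2 field_simps)
  next
    case False
    then show ?thesis
      using cross by (intro exI[of _ "C$1 / w$1"]) (auto simp: vec_eq_iff forall_2 field_simps)
  qed
  then show ?thesis by (auto simp: collinear_lemma)
qed

lemma inner_ge_norm_mult_if_close: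
  fixes v w :: "'a::real_inner"
  assumes "norm (w - v) \<le> \<theta> * norm v" "0 \<le> k" "k * (1 + \<theta>) \<le> 1 - \<theta>"
  shows "k * norm v * norm w \<le> v \<bullet> w"
proof -
  have "v \<bullet> w = (norm v)^2 + v \<bullet> (w - v)"
    by (simp add: inner_diff_right power2_norm_eq_inner)
  moreover have "- (norm v * norm (w - v)) \<le> v \<bullet> (w - v)"
    using Cauchy_Schwarz_ineq2[of v "w - v"] by linarith
  moreover have "norm v * norm (w - v) \<le> norm v * (\<theta> * norm v)"
    using assms(1) by (simp add: mult_left_mono)
  ultimately have lower: "(norm v)^2 * (1 - \<theta>) \<le> v \<bullet> w"
    by (simp add: power2_eq_square algebra_simps)
  have "norm w \<le> norm v * (1 + \<theta>)"
    using norm_triangle_ineq[of v "w - v"] assms(1) by (simp add: algebra_simps)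
  then have "k * norm v * norm w \<le> k * norm v * (norm v * (1 + \<theta>))"
    using assms(2) by (intro mult_left_mono) auto
  also have "\<dots> = (norm v)^2 * (k * (1 + \<theta>))" by (simp add: power2_eq_square algebra_simps)
  also have "\<dots> \<le> (norm v)^2 * (1 - \<theta>)" using assms(3) by (intro mult_left_mono) auto
  finally show ?thesis using lower by linarith
qed

lemma tangent_inner_ge_near_start:
  fixes g' :: "real \<Rightarrow> real^2"
  assumes "continuous_on {a..b} g'" "a \<le> b" "g' a \<noteq> 0" "0 \<le> k" "k < 1" "a < e\<^sub>0"
  obtains e where "a < e" "e \<le> e\<^sub>0"
    "\<And>s. s \<in> {a..b} \<Longrightarrow> s \<le> e \<Longrightarrow> k * norm (g' a) * norm (g' s) \<le> g' a \<bullet> g' s"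
proof -
  define \<theta> where "\<theta> = (1 - k) / (1 + k)"
  have "0 < \<theta>" "k * (1 + \<theta>) \<le> 1 - \<theta>"
    using assms(4,5) unfolding \<theta>_def by (auto simp: field_simps)
  obtain \<delta> where "0 < \<delta>" and close: "\<And>s. s \<in> {a..b} \<Longrightarrow> dist s a < \<delta> \<Longrightarrow> norm (g' s - g' a) \<le> \<theta> * norm (g' a)"
  proof -
    have "0 < \<theta> * norm (g' a)" using \<open>0 < \<theta>\<close> assms(3) by simp
    then show ?thesis
      using assms(1,2) that unfolding continuous_on_iff dist_norm
      by (metis atLeastAtMost_iff dual_order.refl less_imp_le)
  qed
  show ?thesis
  proof (rule that[of "min e\<^sub>0 (a + \<delta> / 2)"])
    show "a < min e\<^sub>0 (a + \<delta> / 2)" using assms(6) \<open>0 < \<delta>\<close> by simp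
    fix s assume "s \<in> {a..b}" "s \<le> min e\<^sub>0 (a + \<delta> / 2)"
    then have "norm (g' s - g' a) \<le> \<theta> * norm (g' a)"
      using close \<open>0 < \<delta>\<close> by (auto simp: dist_real_def)
    then show "k * norm (g' a) * norm (g' s) \<le> g' a \<bullet> g' s"
      using inner_ge_norm_mult_if_close assms(4) \<open>k * (1 + \<theta>) \<le> 1 - \<theta>\<close> by blast
  qed simp
qed

lemma arc_length_has_integral:
  fixes g' :: "real \<Rightarrow> real^2"
  assumes "continuous_on {a..b} g'" "t \<le> b"
  shows "((\<lambda>s. norm (g' s)) has_integral arc_length g' a t) {a..t}"
proof -
  have "continuous_on {a..t} (\<lambda>s. norm (g' s))"
    using assms by (intro continuous_on_norm continuous_on_subset[OF assms(1)]) auto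
  then show ?thesis
    unfolding arc_length_def by (intro integrable_integral integrable_continuous_interval)
qed

lemma arc_length_mono:
  fixes g' :: "real \<Rightarrow> real^2"
  assumes "continuous_on {a..b} g'" "\<tau> \<le> t" "t \<le> b"
  shows "arc_length g' a \<tau> \<le> arc_length g' a t"
proof -
  have "(\<lambda>s. norm (g' s)) integrable_on {a..\<tau>}" "(\<lambda>s. norm (g' s)) integrable_on {a..t}"
    using arc_length_has_integral[OF assms(1)] assms(2,3) by (meson has_integral_integrable order_trans)+
  then show ?thesis
    unfolding arc_length_def using assms(2) by (intro integral_subset_le) auto
qed

lemma inner_chord_has_integral:
  fixes g g' :: "real \<Rightarrow> real^2"
  assumes "\<And>s. s \<in> {a..b} \<Longrightarrow> (g has_vector_derivative g' s) (at s within {a..b})"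
    "t \<in> {a..b}"
  shows "((\<lambda>s. u \<bullet> g' s) has_integral u \<bullet> (g t - g a)) {a..t}"
proof -
  have "((\<lambda>s. u \<bullet> g' s) has_integral u \<bullet> g t - u \<bullet> g a) {a..t}"
  proof (rule fundamental_theorem_of_calculus)
    fix s assume "s \<in> {a..t}"
    then have "(g has_vector_derivative g' s) (at s within {a..t})"
      using assms has_vector_derivative_within_subset[of g "g' s" s "{a..b}" "{a..t}"] by auto
    then show "((\<lambda>s. u \<bullet> g s) has_vector_derivative u \<bullet> g' s) (at s within {a..t})"
      unfolding has_vector_derivative_def
      by (auto intro!: derivative_eq_intros simp: algebra_simps)
  qed (use assms(2) in auto)
  then show ?thesis by (simp add: inner_diff_right)
qed

lemma inner_chord_le_arc_length:
  fixes g g' :: "real \<Rightarrow> real^2"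
  assumes "\<And>s. s \<in> {a..b} \<Longrightarrow> (g has_vector_derivative g' s) (at s within {a..b})"
    "continuous_on {a..b} g'" "t \<in> {a..b}"
  shows "v \<bullet> (g t - g a) \<le> norm v * arc_length g' a t"
proof (rule has_integral_le[OF inner_chord_has_integral[OF assms(1,3)]])
  show "((\<lambda>s. norm v * norm (g' s)) has_integral norm v * arc_length g' a t) {a..t}"
    using has_integral_mult_right[OF arc_length_has_integral[OF assms(2), of t]] assms(3) by simp
qed (auto simp: norm_cauchy_schwarz)

lemma arc_length_le_inner_chord:
  fixes g g' :: "real \<Rightarrow> real^2"
  assumes "\<And>s. s \<in> {a..b} \<Longrightarrow> (g has_vector_derivative g' s) (at s within {a..b})"
    "continuous_on {a..b} g'" "t \<in> {a..b}"
    and "\<And>s. s \<in> {a..t} \<Longrightarrow> k * norm v * norm (g' s) \<le> v \<bullet> g' s"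
  shows "k * norm v * arc_length g' a t \<le> v \<bullet> (g t - g a)"
proof (rule has_integral_le[OF _ inner_chord_has_integral[OF assms(1,3)]])
  show "((\<lambda>s. k * norm v * norm (g' s)) has_integral k * norm v * arc_length g' a t) {a..t}"
    using has_integral_mult_right[OF arc_length_has_integral[OF assms(2), of t]] assms(3) by simp
qed (use assms(4) in auto)

lemma arc_length_gt_if_inner_chord_gt:
  fixes g g' :: "real \<Rightarrow> real^2"
  assumes D: "\<And>s. s \<in> {a..b} \<Longrightarrow> (g has_vector_derivative g' s) (at s within {a..b})"
    and g'_cont: "continuous_on {a..b} g'" and "\<tau> \<in> {a..b}" "t \<in> {a..b}"
    and "v \<noteq> 0" "0 < k" "0 \<le> c"
    and close: "\<And>s. s \<in> {a..t} \<Longrightarrow> k * norm v * norm (g' s) \<le> v \<bullet> g' s"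
    and "c / k * (v \<bullet> (g t - g a)) < v \<bullet> (g \<tau> - g a)"
  shows "c * arc_length g' a t < arc_length g' a \<tau>"
proof -
  have "c * (norm v * arc_length g' a t) = c / k * (k * norm v * arc_length g' a t)"
    using assms(6) by simp
  also have "\<dots> \<le> c / k * (v \<bullet> (g t - g a))"
    using arc_length_le_inner_chord[OF D g'_cont assms(4) close] assms(6,7) by (intro mult_left_mono) auto
  also have "\<dots> < v \<bullet> (g \<tau> - g a)" by (rule assms(9))
  also have "\<dots> \<le> norm v * arc_length g' a \<tau>" by (rule inner_chord_le_arc_length[OF D g'_cont assms(3)])
  finally show ?thesis using assms(5) by (simp add: mult.left_commute)
qed

lemma arc_length_le_Sup_collinear_params:
  fixes g g' :: "real \<Rightarrow> real^2"
  assumes "continuous_on {a..b} g'" "t \<le> b" "\<tau> \<in> collinear_params g g' a t"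
  shows "arc_length g' a \<tau> \<le> Sup (arc_length g' a ` collinear_params g g' a t)"
proof (rule cSup_upper)
  show "bdd_above (arc_length g' a ` collinear_params g g' a t)"
  proof (rule bdd_aboveI2)
    fix \<tau>' assume "\<tau>' \<in> collinear_params g g' a t"
    then show "arc_length g' a \<tau>' \<le> arc_length g' a t"
      using arc_length_mono[OF assms(1) _ assms(2)] unfolding collinear_params_def by simp
  qed
qed (use assms(3) in blast)

lemma has_real_derivative_inner_diff:
  fixes g :: "real \<Rightarrow> 'a::real_inner"
  assumes "(g has_vector_derivative w) F"
  shows "((\<lambda>t. u \<bullet> (g t - c)) has_real_derivative u \<bullet> w) F"
proof -
  have "((\<lambda>t. u \<bullet> (g t - c)) has_derivative (\<lambda>h. u \<bullet> (h *\<^sub>R w))) F"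
    using assms unfolding has_vector_derivative_def by (auto intro!: derivative_eq_intros)
  moreover have "(\<lambda>h. u \<bullet> (h *\<^sub>R w)) = (*) (u \<bullet> w)" by (auto simp: mult.commute)
  ultimately show ?thesis unfolding has_field_derivative_def by simp
qed

lemma tendsto_ratio_at_right_if_deriv:
  fixes p q :: "real \<Rightarrow> real"
  assumes "a < b" "p a = 0" "q a = 0" "P \<noteq> 0"
    and "(p has_real_derivative P) (at a within {a..b})" "(q has_real_derivative Q) (at a within {a..b})"
  shows "((\<lambda>t. q t / p t) \<longlongrightarrow> Q / P) (at_right a)"
proof -
  have "((\<lambda>t. (p t - p a) / (t - a)) \<longlongrightarrow> P) (at_right a)"
    "((\<lambda>t. (q t - q a) / (t - a)) \<longlongrightarrow> Q) (at_right a)"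
    using assms(5,6) unfolding has_field_derivative_iff at_within_Icc_at_right[OF assms(1)] .
  then have lim: "((\<lambda>t. ((q t - q a) / (t - a)) / ((p t - p a) / (t - a))) \<longlongrightarrow> Q / P) (at_right a)"
    using tendsto_divide assms(4) by blast
  have cancel: "((q t - q a) / (t - a)) / ((p t - p a) / (t - a)) = q t / p t" if "a < t" for t
    using that assms(2,3) by (cases "p t = 0") (simp_all add: field_simps)
  have "\<forall>\<^sub>F t in at_right a. ((q t - q a) / (t - a)) / ((p t - p a) / (t - a)) = q t / p t"
    unfolding eventually_at_right_field by (intro exI[of _ b] conjI assms(1) allI impI cancel)
  with lim show ?thesis by (simp add: tendsto_cong[symmetric])
qed

lemma exists_delayed_parallel_tangent:
  fixes g g' :: "real \<Rightarrow> real^2" and a b e c :: real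
  assumes "a < e" "e \<le> b"
    and D: "\<And>t. t \<in> {a..b} \<Longrightarrow> (g has_vector_derivative g' t) (at t within {a..b})"
    and g'_cont: "continuous_on {a..b} g'"
    and pos: "\<And>t. t \<in> {a..e} \<Longrightarrow> 0 < g' a \<bullet> g' t"
    and "0 < c" "c * exp 1 < 1"
  shows "\<exists>\<tau> t. a < \<tau> \<and> \<tau> \<le> t \<and> t < e \<and> c * (g' a \<bullet> (g t - g a)) < g' a \<bullet> (g \<tau> - g a)
    \<and> collinear {0, g' \<tau>, g t - g a}"
proof -
  define v where "v = g' a"
  define p where "p t = v \<bullet> (g t - g a)" for t
  define q where "q t = rot90 v \<bullet> (g t - g a)" for t
  have deriv: "(p has_real_derivative v \<bullet> g' t) (at t within {a..b})"
    "(q has_real_derivative rot90 v \<bullet> g' t) (at t within {a..b})" if "t \<in> {a..b}" for t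
    unfolding p_def q_def using has_real_derivative_inner_diff[OF D[OF that]] by auto
  have deriv_at: "(p has_real_derivative v \<bullet> g' t) (at t)" "(q has_real_derivative rot90 v \<bullet> g' t) (at t)"
    if "t \<in> {a<..<e}" for t
    using deriv[of t] that assms(2) at_within_Icc_at[of a t b] by auto
  have "continuous_on {a..e} g"
    by (rule continuous_on_subset[OF continuous_on_vector_derivative[OF D]]) (use assms(2) in auto)
  then have p_cont: "continuous_on {a..e} p"
    unfolding p_def by (intro continuous_intros)
  have p'_pos: "0 < v \<bullet> g' t" if "t \<in> {a<..<e}" for t
    using pos[of t] that unfolding v_def by auto
  interpret chord_coordinates p q "\<lambda>t. v \<bullet> g' t" "\<lambda>t. rot90 v \<bullet> g' t" a e
    using assms(1) p_cont deriv_at p'_pos by unfold_locales (auto simp: p_def)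
  have "continuous_on {a<..<e} g'" by (rule continuous_on_subset[OF g'_cont]) (use assms(2) in auto)
  then have tangent_cont: "continuous_on {a<..<e} (\<lambda>t. (rot90 v \<bullet> g' t) / (v \<bullet> g' t))"
    using p'_pos by (intro continuous_intros) (auto simp: less_imp_neq[symmetric])
  have "a < b" "a \<in> {a..b}" "p a = 0" "q a = 0" "v \<bullet> g' a \<noteq> 0"
    using assms(1,2) pos[of a] unfolding p_def q_def v_def by auto
  from tendsto_ratio_at_right_if_deriv[OF this(1,3-5) deriv[OF this(2)]]
  have lim: "((\<lambda>t. q t / p t) \<longlongrightarrow> 0) (at_right a)" by (simp add: v_def)
  obtain \<tau> t where \<tau>t: "a < \<tau>" "\<tau> \<le> t" "t < e" "c * p t < p \<tau>"
    "rot90 v \<bullet> g' \<tau> / (v \<bullet> g' \<tau>) = q t / p t"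
    using exists_delayed_tangent_slope_eq_chord_slope[OF assms(6,7) tangent_cont lim] by auto
  have "v \<bullet> (g t - g a) \<noteq> 0" using p_pos[of t] \<tau>t unfolding p_def by auto
  then have "collinear {0, g' \<tau>, g t - g a}"
    using collinear_if_rot90_slopes_eq[of v "g' \<tau>" "g t - g a"] p'_pos[of \<tau>] \<tau>t
    unfolding p_def q_def by auto
  then show ?thesis using \<tau>t unfolding p_def v_def by blast
qed

lemma frequently_collinear_params_ratio_gt:
  fixes g g' :: "real \<Rightarrow> real^2" and a b c :: real
  assumes "a < b"
    and D: "\<And>t. t \<in> {a..b} \<Longrightarrow> (g has_vector_derivative g' t) (at t within {a..b})"
    and g'_cont: "continuous_on {a..b} g'"
    and nz: "\<And>t. t \<in> {a..b} \<Longrightarrow> g' t \<noteq> 0"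
    and "0 < c" "c * exp 1 < 1"
  shows "\<exists>\<^sub>F t in at_right a. c < Sup (arc_length g' a ` collinear_params g g' a t) / arc_length g' a t"
proof -
  define v where "v = g' a"
  define L where "L = arc_length g' a"
  have "\<exists>t. a < t \<and> t < e\<^sub>0 \<and> c < Sup (L ` collinear_params g g' a t) / L t" if "a < e\<^sub>0" for e\<^sub>0
  proof -
    define k where "k = (1 + c * exp 1) / 2"
    have "0 < c * exp 1" using assms(5) by simp
    then have "0 < k" "k < 1" "c * exp 1 < k" unfolding k_def using assms(6) by auto
    then have k: "0 < k" "k < 1" "0 < c / k" "c / k * exp 1 < 1" "0 \<le> k"
      using assms(5) by (auto simp: field_simps)
    have "v \<noteq> 0" using nz[of a] assms(1) unfolding v_def by simp
    have "a \<in> {a..b}" "a < min e\<^sub>0 b" using assms(1) that by auto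
    obtain e where e: "a < e" "e \<le> min e\<^sub>0 b"
      and close: "\<And>s. s \<in> {a..b} \<Longrightarrow> s \<le> e \<Longrightarrow> k * norm v * norm (g' s) \<le> v \<bullet> g' s"
      unfolding v_def
      by (rule tangent_inner_ge_near_start[OF g'_cont _ nz \<open>0 \<le> k\<close> k(2) \<open>a < min e\<^sub>0 b\<close>])
        (use \<open>a \<in> {a..b}\<close> in auto)
    have "0 < v \<bullet> g' s" if "s \<in> {a..e}" for s
    proof -
      have "0 < k * norm v * norm (g' s)" using k(1) \<open>v \<noteq> 0\<close> nz[of s] that e by auto
      then show ?thesis using close[of s] that e by auto
    qed
    then obtain \<tau> t where \<tau>t: "a < \<tau>" "\<tau> \<le> t" "t < e"
      "c / k * (v \<bullet> (g t - g a)) < v \<bullet> (g \<tau> - g a)" "collinear {0, g' \<tau>, g t - g a}"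
      using exists_delayed_parallel_tangent[OF e(1) _ D g'_cont _ k(3,4)] e unfolding v_def by auto
    then have "\<tau> \<in> collinear_params g g' a t" unfolding collinear_params_def by auto
    have "c * L t < L \<tau>"
      using arc_length_gt_if_inner_chord_gt[OF D g'_cont _ _ \<open>v \<noteq> 0\<close> k(1) _ _ \<tau>t(4)] close \<tau>t e assms(5)
      unfolding L_def by auto
    moreover have "L \<tau> \<le> Sup (L ` collinear_params g g' a t)"
      using arc_length_le_Sup_collinear_params[OF g'_cont _ \<open>\<tau> \<in> collinear_params g g' a t\<close>] \<tau>t e
      unfolding L_def by auto
    moreover have "L \<tau> \<le> L t"
      using arc_length_mono[OF g'_cont \<tau>t(2)] \<tau>t e unfolding L_def by auto
    ultimately have "c * L t < Sup (L ` collinear_params g g' a t)" "0 < (1 - c) * L t"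
      by (auto simp: algebra_simps)
    moreover have "c * 1 < c * exp 1" using assms(5) by (intro mult_strict_left_mono) auto
    then have "c < 1" using assms(6) by simp
    ultimately have "c * L t < Sup (L ` collinear_params g g' a t)" "0 < L t"
      by (auto simp: zero_less_mult_iff)
    then show ?thesis using \<tau>t e by (intro exI[of _ t]) (auto simp: pos_less_divide_eq)
  qed
  then show ?thesis
    unfolding frequently_def eventually_at_right_field L_def by (meson not_less_iff_gr_or_eq)
qed

lemma Limsup_ge_if_frequently_gt:
  fixes f :: "'a \<Rightarrow> 'b::complete_linorder"
  assumes "\<exists>\<^sub>F x in F. c < f x"
  shows "c \<le> Limsup F f"
proof (rule ccontr)
  assume "\<not> c \<le> Limsup F f"
  then have "\<forall>\<^sub>F x in F. f x < c" by (intro Limsup_lessD) auto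
  then have "\<forall>\<^sub>F x in F. \<not> c < f x" by (auto elim: eventually_mono)
  then show False using assms by (simp add: frequently_def)
qed

theorem corollary2:
  fixes g g' :: "real \<Rightarrow> real^2" and a b :: real
  assumes "a < b"
    and "\<And>t. t \<in> {a..b} \<Longrightarrow> (g has_vector_derivative g' t) (at t within {a..b})"
    and "continuous_on {a..b} g'"
    and "\<And>t. t \<in> {a..b} \<Longrightarrow> g' t \<noteq> 0"
  shows "Limsup (at_right a)
           (\<lambda>t. ereal (Sup ((arc_length g' a) ` collinear_params g g' a t) / arc_length g' a t))
         \<ge> ereal (1 / exp 1)"
proof (rule dense_le_bounded[of 0])
  fix w :: ereal assume w: "0 < w" "w < ereal (1 / exp 1)"
  then obtain c where "w = ereal c" "0 < c" "c * exp 1 < 1"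
    by (cases w) (auto simp: field_simps)
  then show "w \<le> Limsup (at_right a)
      (\<lambda>t. ereal (Sup ((arc_length g' a) ` collinear_params g g' a t) / arc_length g' a t))"
    using frequently_collinear_params_ratio_gt[OF assms] by (auto intro!: Limsup_ge_if_frequently_gt)
qed simp

end
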